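(* Let $\mathcal{A}$ be a finite abelian group and $\mathbb{M}$ a monoid. Every probability measure on $\mathcal{A}^{\mathbb{M}}$ is a weak* limit of harmonically mixing probability measures on $\mathcal{A}^{\mathbb{M}}$; i.e. the harmonically mixing measures are weak* dense in the space of probability measures on $\mathcal{A}^{\mathbb{M}}$.
   Context: Characters of $\mathcal{A}^{\mathbb{M}}$ are $\chi=\bigotimes_{m}\chi_m$ with $\chi_m$ characters of $\mathcal{A}$, all but finitely many trivial; rank$(\chi)$ is the number of nontrivial $\chi_m$. A measure $\mu$ is harmonically mixing if for every $\varepsilon>0$ there is $R$ such that rank$(\chi)>R$ implies $|\int\chi\,d\mu|<\varepsilon$. *)

theory Defs
  imports "HOL-Analysis.Analysis" "HOL-Probability.Probability"
begin

definition group_character :: "('a::ab_group_add \<Rightarrow> complex) \<Rightarrow> bool" where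
  "group_character \<psi> \<longleftrightarrow> (\<forall>a b. \<psi> (a + b) = \<psi> a * \<psi> b) \<and> (\<forall>a. norm (\<psi> a) = 1)"

text \<open>A family of characters of A indexed by M, all but finitely many trivial;
  it determines the character chi = tensor of the chi_m of A^M.\<close>
definition char_family :: "('m \<Rightarrow> 'a::ab_group_add \<Rightarrow> complex) \<Rightarrow> bool" where
  "char_family c \<longleftrightarrow> (\<forall>m. group_character (c m)) \<and> finite {m. c m \<noteq> (\<lambda>_. 1)}"

definition char_support :: "('m \<Rightarrow> 'a \<Rightarrow> complex) \<Rightarrow> 'm set" where
  "char_support c = {m. c m \<noteq> (\<lambda>_. 1)}"

definition prod_char :: "('m \<Rightarrow> 'a \<Rightarrow> complex) \<Rightarrow> ('m \<Rightarrow> 'a) \<Rightarrow> complex" where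
  "prod_char c x = (\<Prod>m\<in>char_support c. c m (x m))"

definition char_rank :: "('m \<Rightarrow> 'a \<Rightarrow> complex) \<Rightarrow> nat" where
  "char_rank c = card (char_support c)"

definition full_shift_space :: "('m \<Rightarrow> 'a) measure" where
  "full_shift_space = Pi\<^sub>M UNIV (\<lambda>_. count_space UNIV)"

definition full_shift_topology :: "('m \<Rightarrow> 'a) topology" where
  "full_shift_topology = product_topology (\<lambda>_. discrete_topology UNIV) UNIV"

definition prob_on_shift :: "('m \<Rightarrow> 'a) measure \<Rightarrow> bool" where
  "prob_on_shift \<mu> \<longleftrightarrow> prob_space \<mu> \<and> sets \<mu> = sets full_shift_space"

definition harmonically_mixing :: "('m \<Rightarrow> 'a::ab_group_add) measure \<Rightarrow> bool" where
  "harmonically_mixing \<mu> \<longleftrightarrow>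
     (\<forall>\<epsilon>>0. \<exists>R::nat. \<forall>c::'m \<Rightarrow> 'a \<Rightarrow> complex.
        char_family c \<and> char_rank c > R \<longrightarrow> norm (integral\<^sup>L \<mu> (prod_char c)) < \<epsilon>)"

definition weak_star_adherent :: "('m \<Rightarrow> 'a) measure set \<Rightarrow> ('m \<Rightarrow> 'a) measure \<Rightarrow> bool" where
  "weak_star_adherent P \<mu> \<longleftrightarrow>
     (\<forall>F \<epsilon>. finite F \<and> (\<forall>f\<in>F. continuous_map full_shift_topology euclideanreal f) \<and> \<epsilon> > 0 \<longrightarrow>
        (\<exists>\<nu>\<in>P. \<forall>f\<in>F. \<bar>integral\<^sup>L \<nu> f - integral\<^sup>L \<mu> f\<bar> < \<epsilon>))"

end

theory Submission
  imports Defs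
begin

(* Given finitely many continuous test functions and \<epsilon> > 0, compactness of A^M makes each of
   them depend, up to \<epsilon>, only on the coordinates in one finite window N. Keep a \<mu>-random
   configuration on N and replace it outside N by independent uniformly distributed symbols.
   The new measure has the same marginal on N, so it integrates every test function like \<mu> up
   to \<epsilon>; and every character of rank > |N| has a nontrivial factor outside N, hence
   integral 0, since a nontrivial character of A has mean 0 under the uniform measure. *)

lemma topspace_full_shift_topology [simp]:
  "topspace (full_shift_topology :: ('m \<Rightarrow> 'a) topology) = UNIV"
  unfolding full_shift_topology_def by (auto simp: topspace_product_topology PiE_UNIV_domain)

lemma compact_space_full_shift_topology:
  "compact_space (full_shift_topology :: ('m \<Rightarrow> 'a::finite) topology)"
  unfolding full_shift_topology_def
  by (simp add: compact_space_product_topology compact_space_discrete_topology)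

lemma openin_full_shift_topology_cylinder:
  "finite {m. U m \<noteq> UNIV} \<Longrightarrow> openin full_shift_topology (Pi\<^sub>E UNIV U)"
  unfolding full_shift_topology_def openin_product_topology_alt by auto

lemma continuous_full_shift_cylinder_nbhd:
  fixes f :: "('m \<Rightarrow> 'a) \<Rightarrow> real"
  assumes f: "continuous_map full_shift_topology euclideanreal f" and "e > 0"
  shows "\<exists>U. finite {m. U m \<noteq> UNIV} \<and> x \<in> Pi\<^sub>E UNIV U \<and> Pi\<^sub>E UNIV U \<subseteq> {y. \<bar>f y - f x\<bar> < e}"
proof -
  have "openin full_shift_topology {y. f y \<in> ball (f x) e}"
    using openin_continuous_map_preimage[OF f, of "ball (f x) e"] by simp
  moreover have "{y. f y \<in> ball (f x) e} = {y. \<bar>f y - f x\<bar> < e}"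
    by (auto simp: dist_real_def abs_minus_commute)
  ultimately show ?thesis
    using \<open>e > 0\<close> unfolding full_shift_topology_def openin_product_topology_alt by auto
qed

lemma continuous_full_shift_locally_constant:
  fixes f :: "('m \<Rightarrow> 'a::finite) \<Rightarrow> real"
  assumes f: "continuous_map full_shift_topology euclideanreal f" and "e > 0"
  obtains N where "finite N" "\<And>x y. (\<forall>m\<in>N. x m = y m) \<Longrightarrow> \<bar>f x - f y\<bar> < e"
proof -
  have "\<exists>U. finite {m. U m \<noteq> UNIV} \<and> x \<in> Pi\<^sub>E UNIV U \<and> Pi\<^sub>E UNIV U \<subseteq> {y. \<bar>f y - f x\<bar> < e/2}"
    for x
    using \<open>e > 0\<close> by (intro continuous_full_shift_cylinder_nbhd[OF f]) simp
  then obtain U where U: "\<And>x. finite {m. U x m \<noteq> UNIV}" "\<And>x. x \<in> Pi\<^sub>E UNIV (U x)"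
    "\<And>x. Pi\<^sub>E UNIV (U x) \<subseteq> {y. \<bar>f y - f x\<bar> < e/2}"
    by metis
  have "\<forall>V\<in>range (\<lambda>x. Pi\<^sub>E UNIV (U x)). openin full_shift_topology V"
    using U(1) openin_full_shift_topology_cylinder by blast
  moreover have "UNIV \<subseteq> (\<Union>x. Pi\<^sub>E UNIV (U x))"
    using U(2) by blast
  ultimately have "\<exists>\<F>. finite \<F> \<and> \<F> \<subseteq> range (\<lambda>x. Pi\<^sub>E UNIV (U x)) \<and> UNIV \<subseteq> \<Union>\<F>"
    using compact_space_full_shift_topology[unfolded compact_space_alt, rule_format,
        of "range (\<lambda>x. Pi\<^sub>E UNIV (U x))"] by simp
  then obtain X where X: "finite X" "UNIV \<subseteq> (\<Union>x\<in>X. Pi\<^sub>E UNIV (U x))"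
    by (metis finite_subset_image)
  show ?thesis
  proof
    show "finite (\<Union>x\<in>X. {m. U x m \<noteq> UNIV})"
      using X(1) U(1) by blast
  next
    fix y z :: "'m \<Rightarrow> 'a"
    assume agree: "\<forall>m\<in>(\<Union>x\<in>X. {m. U x m \<noteq> UNIV}). y m = z m"
    obtain x where x: "x \<in> X" "y \<in> Pi\<^sub>E UNIV (U x)"
      using X(2) by blast
    have "z m \<in> U x m" for m
    proof (cases "U x m = UNIV")
      case False
      with agree x have "z m = y m"
        by auto
      with x(2) show ?thesis
        by auto
    qed simp
    then have "z \<in> Pi\<^sub>E UNIV (U x)"
      by (simp add: PiE_UNIV_domain)
    with x U(3)[of x] have "\<bar>f y - f x\<bar> < e/2" "\<bar>f z - f x\<bar> < e/2"
      by auto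
    then show "\<bar>f y - f z\<bar> < e"
      by linarith
  qed
qed

lemma continuous_full_shift_locally_constant_finite:
  fixes F :: "(('m \<Rightarrow> 'a::finite) \<Rightarrow> real) set"
  assumes "finite F" and cont: "\<forall>f\<in>F. continuous_map full_shift_topology euclideanreal f"
    and "e > 0"
  obtains N where "finite N" "\<And>f x y. f \<in> F \<Longrightarrow> \<forall>m\<in>N. x m = y m \<Longrightarrow> \<bar>f x - f y\<bar> < e"
proof -
  have "\<forall>f\<in>F. \<exists>N. finite N \<and> (\<forall>x y. (\<forall>m\<in>N. x m = y m) \<longrightarrow> \<bar>f x - f y\<bar> < e)"
  proof
    fix f assume "f \<in> F"
    show "\<exists>N. finite N \<and> (\<forall>x y. (\<forall>m\<in>N. x m = y m) \<longrightarrow> \<bar>f x - f y\<bar> < e)"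
      by (rule continuous_full_shift_locally_constant[of f e])
        (use cont \<open>f \<in> F\<close> \<open>e > 0\<close> in auto)
  qed
  then obtain N where N: "\<forall>f\<in>F. finite (N f) \<and> (\<forall>x y. (\<forall>m\<in>N f. x m = y m) \<longrightarrow> \<bar>f x - f y\<bar> < e)"
    by metis
  show ?thesis
  proof (rule that[of "\<Union>f\<in>F. N f"])
    show "finite (\<Union>f\<in>F. N f)"
      using \<open>finite F\<close> N by blast
    show "\<bar>f x - f y\<bar> < e" if "f \<in> F" and "\<forall>m\<in>(\<Union>f\<in>F. N f). x m = y m" for f x y
      using N that by fastforce
  qed
qed

lemma continuous_full_shift_bounded:
  fixes f :: "('m \<Rightarrow> 'a::finite) \<Rightarrow> real"
  assumes "continuous_map full_shift_topology euclideanreal f"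
  obtains B where "\<And>x. \<bar>f x\<bar> \<le> B"
proof -
  have "compactin euclideanreal (f ` topspace full_shift_topology)"
    using compact_space_full_shift_topology assms
    unfolding compact_space_def by (rule image_compactin)
  then have "bounded (range f)"
    by (simp add: compact_imp_bounded)
  then show ?thesis
    using that by (auto simp: bounded_real)
qed

lemma borel_measurable_full_shift_local:
  fixes h :: "('m \<Rightarrow> 'a::finite) \<Rightarrow> 'b::topological_space"
  assumes "finite N" and window: "\<And>x y. (\<forall>m\<in>N. x m = y m) \<Longrightarrow> h x = h y"
  shows "h \<in> borel_measurable full_shift_space"
proof -
  have fiber: "(\<lambda>x. restrict x N) -` {z} \<inter> space full_shift_space
      = {x \<in> space (full_shift_space :: ('m \<Rightarrow> 'a) measure). \<forall>m\<in>N. x m = z m}"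
    if "z \<in> N \<rightarrow>\<^sub>E UNIV" for z
    using that by (auto simp: restrict_def fun_eq_iff PiE_iff extensional_def)
  have "{x \<in> space (full_shift_space :: ('m \<Rightarrow> 'a) measure). \<forall>m\<in>N. x m = z m}
      \<in> sets full_shift_space" for z
    unfolding full_shift_space_def using \<open>finite N\<close> by measurable
  then have "(\<lambda>x. restrict x N) \<in> full_shift_space \<rightarrow>\<^sub>M count_space (N \<rightarrow>\<^sub>E (UNIV :: 'a set))"
    using \<open>finite N\<close> by (subst measurable_count_space_eq2) (auto simp: fiber finite_PiE)
  then have "(\<lambda>x. h (restrict x N)) \<in> borel_measurable full_shift_space"
    by (rule measurable_compose) simp
  moreover have "h (restrict x N) = h x" for x
    by (rule window) simp
  ultimately show ?thesis
    by simp
qed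

(* Not automatic: for uncountable M the product sigma-algebra is smaller than the Borel sets of
   the product topology. But f is a uniform limit of functions of finitely many coordinates. *)
lemma continuous_full_shift_borel_measurable:
  fixes f :: "('m \<Rightarrow> 'a::finite) \<Rightarrow> real"
  assumes f: "continuous_map full_shift_topology euclideanreal f"
  shows "f \<in> borel_measurable full_shift_space"
proof -
  have "\<exists>N. finite N \<and> (\<forall>x y. (\<forall>m\<in>N. x m = y m) \<longrightarrow> \<bar>f x - f y\<bar> < inverse (real (Suc n)))"
    for n
    by (rule continuous_full_shift_locally_constant[OF f, of "inverse (real (Suc n))"]) auto
  then obtain N where N: "\<And>n. finite (N n)"
    "\<And>n x y. (\<forall>m\<in>N n. x m = y m) \<Longrightarrow> \<bar>f x - f y\<bar> < inverse (real (Suc n))"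
    by metis
  show ?thesis
  proof (rule borel_measurable_LIMSEQ_real)
    show "(\<lambda>x. f (restrict x (N n))) \<in> borel_measurable full_shift_space" for n
      by (rule borel_measurable_full_shift_local[OF N(1)[of n]])
        (auto intro!: arg_cong[where f=f] simp: restrict_def)
    show "(\<lambda>n. f (restrict x (N n))) \<longlonglongrightarrow> f x" for x
    proof (rule Lim_null[THEN iffD2], rule Lim_null_comparison)
      have "norm (f (restrict x (N n)) - f x) \<le> inverse (real (Suc n))" for n
        using N(2)[of n "restrict x (N n)" x] by simp
      then show "\<forall>\<^sub>F n in sequentially. norm (f (restrict x (N n)) - f x) \<le> inverse (real (Suc n))"
        by simp
    qed (rule LIMSEQ_inverse_real_of_nat)
  qed
qed

lemma (in prob_space) abs_integral_diff_le:
  fixes f g :: "'a \<Rightarrow> real"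
  assumes "integrable M f" "integrable M g" and "\<And>x. x \<in> space M \<Longrightarrow> \<bar>f x - g x\<bar> \<le> e"
  shows "\<bar>integral\<^sup>L M f - integral\<^sup>L M g\<bar> \<le> e"
proof -
  have "AE x in M. \<bar>f x - g x\<bar> \<le> e"
    using assms(3) by (rule AE_I2)
  then have "AE x in M. -e \<le> f x - g x" "AE x in M. f x - g x \<le> e"
    by (eventually_elim, simp add: abs_le_iff)+
  moreover have "integrable M (\<lambda>x. f x - g x)"
    using assms(1,2) by (rule Bochner_Integration.integrable_diff)
  ultimately have "-e \<le> (\<integral>x. f x - g x \<partial>M)" "(\<integral>x. f x - g x \<partial>M) \<le> e"
    by (simp_all add: integral_ge_const integral_le_const)
  then show ?thesis
    using assms(1,2) by simp
qed

lemma group_character_sum_eq_0: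
  fixes \<psi> :: "'a::{finite, ab_group_add} \<Rightarrow> complex"
  assumes \<psi>: "group_character \<psi>" and "\<psi> \<noteq> (\<lambda>_. 1)"
  shows "(\<Sum>a\<in>UNIV. \<psi> a) = 0"
proof -
  obtain b where b: "\<psi> b \<noteq> 1"
    using \<open>\<psi> \<noteq> (\<lambda>_. 1)\<close> by auto
  have "(\<Sum>a\<in>UNIV. \<psi> a) = (\<Sum>a\<in>UNIV. \<psi> (a + b))"
    by (rule sum.reindex_bij_witness[where i="\<lambda>a. a + b" and j="\<lambda>a. a - b"]) auto
  also have "\<dots> = \<psi> b * (\<Sum>a\<in>UNIV. \<psi> a)"
    using \<psi> by (simp add: group_character_def sum_distrib_left mult.commute)
  finally have "(1 - \<psi> b) * (\<Sum>a\<in>UNIV. \<psi> a) = 0"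
    by (simp add: algebra_simps)
  then show ?thesis
    using b by simp
qed

lemma integral_uniform_group_character:
  fixes \<psi> :: "'a::{finite, ab_group_add} \<Rightarrow> complex"
  assumes "group_character \<psi>" and "\<psi> \<noteq> (\<lambda>_. 1)"
  shows "integral\<^sup>L (uniform_count_measure UNIV) \<psi> = 0"
proof -
  have "integral\<^sup>L (uniform_count_measure UNIV) \<psi> = (1 / CARD('a)) *\<^sub>R (\<Sum>a\<in>UNIV. \<psi> a)"
    by (simp add: uniform_count_measure_def lebesgue_integral_point_measure_finite scaleR_sum_right)
  then show ?thesis
    using group_character_sum_eq_0[OF assms] by simp
qed

definition uniform_shift :: "('m \<Rightarrow> 'a) measure" where
  "uniform_shift = Pi\<^sub>M UNIV (\<lambda>_. uniform_count_measure UNIV)"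

lemma sets_uniform_shift: "sets uniform_shift = sets full_shift_space"
  unfolding uniform_shift_def full_shift_space_def
  by (rule sets_PiM_cong) (auto simp: sets_uniform_count_measure_count_space)

lemma prob_space_uniform_shift: "prob_space (uniform_shift :: ('m \<Rightarrow> 'a::finite) measure)"
  unfolding uniform_shift_def by (intro prob_space_PiM prob_space_uniform_count_measure) auto

lemma integral_uniform_shift_prod_character:
  fixes c :: "'m \<Rightarrow> 'a::{finite, ab_group_add} \<Rightarrow> complex"
  assumes J: "finite J" "m0 \<in> J" and c: "\<And>m. group_character (c m)" and "c m0 \<noteq> (\<lambda>_. 1)"
  shows "(\<integral>y. (\<Prod>m\<in>J. c m (y m)) \<partial>uniform_shift) = 0"
proof -
  define U where "U = uniform_count_measure (UNIV :: 'a set)"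
  have U: "prob_space U"
    unfolding U_def by (rule prob_space_uniform_count_measure) auto
  interpret product_prob_space "\<lambda>_::'m. U" UNIV
    using U by (simp add: product_prob_space_def product_prob_space_axioms_def
        product_sigma_finite_def prob_space_imp_sigma_finite)
  have "sets U = sets (count_space UNIV)"
    unfolding U_def by (rule sets_uniform_count_measure_count_space)
  then have c_measurable: "c m \<in> borel_measurable U" for m
    by (subst measurable_cong_sets[of U "count_space UNIV" borel borel]) simp_all
  have "integrable U (c m)" for m
    using c c_measurable
    by (intro finite_measure.integrable_const_bound[OF prob_space.axioms(1)[OF U], where B=1])
      (auto simp: group_character_def)
  note product_integral = product_integral_prod[OF J(1) this]
  have "(\<lambda>z. \<Prod>m\<in>J. c m (z m)) \<in> borel_measurable (Pi\<^sub>M J (\<lambda>_. U))"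
    using c_measurable by measurable
  then have "(\<integral>y. (\<Prod>m\<in>J. c m (y m)) \<partial>Pi\<^sub>M UNIV (\<lambda>_. U))
      = (\<integral>z. (\<Prod>m\<in>J. c m (z m)) \<partial>distr (Pi\<^sub>M UNIV (\<lambda>_. U)) (Pi\<^sub>M J (\<lambda>_. U)) (\<lambda>y. restrict y J))"
    by (subst integral_distr) (auto intro: measurable_restrict_subset)
  also have "\<dots> = (\<Prod>m\<in>J. integral\<^sup>L U (c m))"
    by (simp add: distr_PiM_restrict_finite J(1) product_integral)
  also have "\<dots> = 0"
    using J integral_uniform_group_character[OF c \<open>c m0 \<noteq> (\<lambda>_. 1)\<close>] unfolding U_def by auto
  finally show ?thesis
    unfolding uniform_shift_def U_def .
qed

lemma measurable_prod_char:
  fixes c :: "'m \<Rightarrow> 'a \<Rightarrow> complex"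
  shows "prod_char c \<in> borel_measurable (full_shift_space :: ('m \<Rightarrow> 'a) measure)"
  unfolding prod_char_def full_shift_space_def
proof (intro borel_measurable_prod)
  fix m
  have "(\<lambda>x::'m \<Rightarrow> 'a. x m) \<in> Pi\<^sub>M UNIV (\<lambda>_. count_space UNIV) \<rightarrow>\<^sub>M count_space UNIV"
    by (rule measurable_component_singleton) simp
  then show "(\<lambda>x. c m (x m)) \<in> borel_measurable (Pi\<^sub>M UNIV (\<lambda>_. count_space UNIV))"
    by (rule measurable_compose) simp
qed

definition splice_on :: "'m set \<Rightarrow> ('m \<Rightarrow> 'a) \<Rightarrow> ('m \<Rightarrow> 'a) \<Rightarrow> 'm \<Rightarrow> 'a" where
  "splice_on N x y m = (if m \<in> N then x m else y m)"

lemma measurable_splice_on: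
  assumes "sets M1 = sets full_shift_space" and "sets M2 = sets full_shift_space"
  shows "case_prod (splice_on N) \<in> M1 \<Otimes>\<^sub>M M2 \<rightarrow>\<^sub>M full_shift_space"
proof -
  have "case_prod (splice_on N) \<in> full_shift_space \<Otimes>\<^sub>M full_shift_space \<rightarrow>\<^sub>M full_shift_space"
    unfolding full_shift_space_def splice_on_def case_prod_beta
  proof (rule measurable_PiM_single')
    fix m
    show "(\<lambda>p. if m \<in> N then fst p m else snd p m)
        \<in> Pi\<^sub>M UNIV (\<lambda>_. count_space UNIV) \<Otimes>\<^sub>M Pi\<^sub>M UNIV (\<lambda>_. count_space UNIV)
          \<rightarrow>\<^sub>M count_space UNIV"
      by (cases "m \<in> N")
        (auto intro!: measurable_compose[OF measurable_fst measurable_component_singleton]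
          measurable_compose[OF measurable_snd measurable_component_singleton])
  qed (auto simp: space_PiM)
  moreover have "sets (M1 \<Otimes>\<^sub>M M2) = sets (full_shift_space \<Otimes>\<^sub>M full_shift_space)"
    using assms by (rule sets_pair_measure_cong)
  ultimately show ?thesis
    using measurable_cong_sets[of "M1 \<Otimes>\<^sub>M M2" "full_shift_space \<Otimes>\<^sub>M full_shift_space"] by blast
qed

definition randomize_outside :: "'m set \<Rightarrow> ('m \<Rightarrow> 'a) measure \<Rightarrow> ('m \<Rightarrow> 'a) measure" where
  "randomize_outside N \<mu> = distr (\<mu> \<Otimes>\<^sub>M uniform_shift) full_shift_space (case_prod (splice_on N))"

lemma pair_prob_space_uniform_shift:
  "prob_space \<mu> \<Longrightarrow> pair_prob_space \<mu> (uniform_shift :: ('m \<Rightarrow> 'a::finite) measure)"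
  by (simp add: pair_prob_space_def pair_sigma_finite_def prob_space_imp_sigma_finite
      prob_space_uniform_shift)

lemma prob_on_shift_randomize_outside:
  fixes \<mu> :: "('m \<Rightarrow> 'a::finite) measure"
  assumes "prob_on_shift \<mu>"
  shows "prob_on_shift (randomize_outside N \<mu>)"
proof -
  interpret pair_prob_space \<mu> "uniform_shift :: ('m \<Rightarrow> 'a) measure"
    using assms pair_prob_space_uniform_shift unfolding prob_on_shift_def by blast
  show ?thesis
    using assms sets_uniform_shift
    by (auto simp: prob_on_shift_def randomize_outside_def
        intro!: prob_space_distr measurable_splice_on)
qed

lemma integral_randomize_outside_pair:
  fixes \<mu> :: "('m \<Rightarrow> 'a) measure"
    and h :: "('m \<Rightarrow> 'a) \<Rightarrow> 'b::{banach, second_countable_topology}"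
  assumes "prob_on_shift \<mu>" and "h \<in> borel_measurable full_shift_space"
  shows "integral\<^sup>L (randomize_outside N \<mu>) h
    = (\<integral>p. h (case_prod (splice_on N) p) \<partial>(\<mu> \<Otimes>\<^sub>M uniform_shift))"
  unfolding randomize_outside_def using assms sets_uniform_shift
  by (intro integral_distr measurable_splice_on) (auto simp: prob_on_shift_def)

lemma integral_randomize_outside:
  fixes \<mu> :: "('m \<Rightarrow> 'a::finite) measure"
    and h :: "('m \<Rightarrow> 'a) \<Rightarrow> 'b::{banach, second_countable_topology}"
  assumes \<mu>: "prob_on_shift \<mu>" and h: "h \<in> borel_measurable full_shift_space"
    and B: "\<And>x. norm (h x) \<le> B"
  shows "integral\<^sup>L (randomize_outside N \<mu>) h = (\<integral>x. (\<integral>y. h (splice_on N x y) \<partial>uniform_shift) \<partial>\<mu>)"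
proof -
  interpret pair_prob_space \<mu> "uniform_shift :: ('m \<Rightarrow> 'a) measure"
    using \<mu> pair_prob_space_uniform_shift unfolding prob_on_shift_def by blast
  have "case_prod (splice_on N) \<in> \<mu> \<Otimes>\<^sub>M uniform_shift \<rightarrow>\<^sub>M full_shift_space"
    using \<mu> sets_uniform_shift unfolding prob_on_shift_def by (intro measurable_splice_on) auto
  then have "integrable (\<mu> \<Otimes>\<^sub>M uniform_shift) (\<lambda>p. h (case_prod (splice_on N) p))"
    using B h by (intro integrable_const_bound[where B=B]) auto
  from integral_fst'[OF this] show ?thesis
    using integral_randomize_outside_pair[OF \<mu> h] by simp
qed

lemma integral_prod_char_randomize_outside:
  fixes \<mu> :: "('m \<Rightarrow> 'a::{finite, ab_group_add}) measure"
  assumes \<mu>: "prob_on_shift \<mu>" and c: "char_family c" and "\<not> char_support c \<subseteq> N"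
  shows "integral\<^sup>L (randomize_outside N \<mu>) (prod_char c) = 0"
proof -
  define S where "S = char_support c"
  have "finite S" and chars: "\<And>m. group_character (c m)"
    using c by (auto simp: char_family_def S_def char_support_def)
  obtain m0 where m0: "m0 \<in> S - N" and "c m0 \<noteq> (\<lambda>_. 1)"
    using \<open>\<not> char_support c \<subseteq> N\<close> by (auto simp: S_def char_support_def)
  have factor: "prod_char c (splice_on N x y) = (\<Prod>m\<in>S \<inter> N. c m (x m)) * (\<Prod>m\<in>S - N. c m (y m))"
    for x y
  proof -
    have "prod_char c (splice_on N x y)
        = (\<Prod>m\<in>S \<inter> N. c m (splice_on N x y m)) * (\<Prod>m\<in>S - N. c m (splice_on N x y m))"
      unfolding prod_char_def S_def[symmetric] using \<open>finite S\<close> by (rule prod.Int_Diff)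
    then show ?thesis
      by (simp add: splice_on_def)
  qed
  have norm_le: "norm (prod_char c x) \<le> 1" for x
    using chars by (simp add: prod_char_def prod_norm[symmetric] group_character_def)
  have "integral\<^sup>L (randomize_outside N \<mu>) (prod_char c)
      = (\<integral>x. (\<Prod>m\<in>S \<inter> N. c m (x m)) * (\<integral>y. (\<Prod>m\<in>S - N. c m (y m)) \<partial>uniform_shift) \<partial>\<mu>)"
    unfolding integral_randomize_outside[OF \<mu> measurable_prod_char norm_le] factor by simp
  also have "(\<integral>y. (\<Prod>m\<in>S - N. c m (y m)) \<partial>uniform_shift) = 0"
    using \<open>finite S\<close> m0 chars \<open>c m0 \<noteq> (\<lambda>_. 1)\<close> by (intro integral_uniform_shift_prod_character) auto
  finally show ?thesis
    by simp
qed

lemma harmonically_mixing_randomize_outside: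
  fixes \<mu> :: "('m \<Rightarrow> 'a::{finite, ab_group_add}) measure"
  assumes "prob_on_shift \<mu>" and "finite N"
  shows "harmonically_mixing (randomize_outside N \<mu>)"
  unfolding harmonically_mixing_def
proof (intro allI impI exI[of _ "card N"])
  fix \<epsilon> :: real and c :: "'m \<Rightarrow> 'a \<Rightarrow> complex"
  assume "\<epsilon> > 0" and c: "char_family c \<and> card N < char_rank c"
  have "\<not> char_support c \<subseteq> N"
  proof
    assume "char_support c \<subseteq> N"
    then have "char_rank c \<le> card N"
      unfolding char_rank_def by (rule card_mono[OF \<open>finite N\<close>])
    with c show False
      by simp
  qed
  then show "norm (integral\<^sup>L (randomize_outside N \<mu>) (prod_char c)) < \<epsilon>"
    using integral_prod_char_randomize_outside[OF \<open>prob_on_shift \<mu>\<close>] c \<open>\<epsilon> > 0\<close> by simp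
qed

lemma integral_randomize_outside_approx:
  fixes \<mu> :: "('m \<Rightarrow> 'a::finite) measure" and h :: "('m \<Rightarrow> 'a) \<Rightarrow> real"
  assumes \<mu>: "prob_on_shift \<mu>" and h: "h \<in> borel_measurable full_shift_space"
    and B: "\<And>x. \<bar>h x\<bar> \<le> B" and window: "\<And>x y. (\<forall>m\<in>N. x m = y m) \<Longrightarrow> \<bar>h x - h y\<bar> \<le> e"
  shows "\<bar>integral\<^sup>L (randomize_outside N \<mu>) h - integral\<^sup>L \<mu> h\<bar> \<le> e"
proof -
  have h_\<mu>: "h \<in> borel_measurable \<mu>"
    using \<mu> h by (subst measurable_cong_sets[where M'=full_shift_space and N'=borel])
      (auto simp: prob_on_shift_def)
  interpret pair_prob_space \<mu> "uniform_shift :: ('m \<Rightarrow> 'a) measure"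
    using \<mu> pair_prob_space_uniform_shift unfolding prob_on_shift_def by blast
  let ?P = "\<mu> \<Otimes>\<^sub>M (uniform_shift :: ('m \<Rightarrow> 'a) measure)"
  have splice_measurable: "case_prod (splice_on N) \<in> ?P \<rightarrow>\<^sub>M full_shift_space"
    using \<mu> sets_uniform_shift unfolding prob_on_shift_def by (intro measurable_splice_on) auto
  note integral_randomize_outside_pair[OF \<mu> h]
  moreover have "integral\<^sup>L \<mu> h = (\<integral>p. h (fst p) \<partial>?P)"
  proof -
    have "integral\<^sup>L \<mu> h = integral\<^sup>L (distr ?P \<mu> fst) h"
      by (simp add: M2.distr_pair_fst)
    also have "\<dots> = (\<integral>p. h (fst p) \<partial>?P)"
      by (rule integral_distr[OF measurable_fst h_\<mu>])
    finally show ?thesis .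
  qed
  moreover have "\<bar>(\<integral>p. h (case_prod (splice_on N) p) \<partial>?P)
      - (\<integral>p. h (fst p) \<partial>?P)\<bar> \<le> e"
  proof (rule P.abs_integral_diff_le)
    show "integrable ?P (\<lambda>p. h (case_prod (splice_on N) p))"
      using B measurable_compose[OF splice_measurable h]
      by (intro P.integrable_const_bound[where B=B]) auto
    show "integrable ?P (\<lambda>p. h (fst p))"
      using B measurable_compose[OF measurable_fst h_\<mu>]
      by (intro P.integrable_const_bound[where B=B]) auto
    show "\<bar>h (case_prod (splice_on N) p) - h (fst p)\<bar> \<le> e" for p
      by (cases p) (auto simp: splice_on_def intro: window)
  qed
  ultimately show ?thesis
    by simp
qed

theorem mainTheorem5:
  fixes \<mu> :: "('m::monoid_mult \<Rightarrow> 'a::{finite, ab_group_add}) measure"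
  assumes "prob_on_shift \<mu>"
  shows "weak_star_adherent {\<nu>. prob_on_shift \<nu> \<and> harmonically_mixing \<nu>} \<mu>"
  unfolding weak_star_adherent_def
proof (intro allI impI, elim conjE)
  fix F :: "(('m \<Rightarrow> 'a) \<Rightarrow> real) set" and \<epsilon> :: real
  assume "finite F" and cont: "\<forall>f\<in>F. continuous_map full_shift_topology euclideanreal f"
    and "\<epsilon> > 0"
  obtain N where "finite N" and N: "\<And>f x y. f \<in> F \<Longrightarrow> \<forall>m\<in>N. x m = y m \<Longrightarrow> \<bar>f x - f y\<bar> < \<epsilon> / 2"
    using \<open>finite F\<close> cont
    by (rule continuous_full_shift_locally_constant_finite[of F "\<epsilon> / 2"]) (use \<open>\<epsilon> > 0\<close> in auto)
  have "\<bar>integral\<^sup>L (randomize_outside N \<mu>) f - integral\<^sup>L \<mu> f\<bar> < \<epsilon>" if "f \<in> F" for f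
  proof -
    have f: "continuous_map full_shift_topology euclideanreal f"
      using cont that by blast
    obtain B where "\<And>x. \<bar>f x\<bar> \<le> B"
      using continuous_full_shift_bounded[OF f] by blast
    then have "\<bar>integral\<^sup>L (randomize_outside N \<mu>) f - integral\<^sup>L \<mu> f\<bar> \<le> \<epsilon> / 2"
    proof (rule integral_randomize_outside_approx[OF assms
          continuous_full_shift_borel_measurable[OF f]])
      show "\<bar>f x - f y\<bar> \<le> \<epsilon> / 2" if "\<forall>m\<in>N. x m = y m" for x y
        using N[OF \<open>f \<in> F\<close> that] by simp
    qed
    with \<open>\<epsilon> > 0\<close> show ?thesis
      by simp
  qed
  moreover have "prob_on_shift (randomize_outside N \<mu>)"
    using assms by (rule prob_on_shift_randomize_outside)
  moreover have "harmonically_mixing (randomize_outside N \<mu>)"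
    using assms \<open>finite N\<close> by (rule harmonically_mixing_randomize_outside)
  ultimately show "\<exists>\<nu>\<in>{\<nu>. prob_on_shift \<nu> \<and> harmonically_mixing \<nu>}.
      \<forall>f\<in>F. \<bar>integral\<^sup>L \<nu> f - integral\<^sup>L \<mu> f\<bar> < \<epsilon>"
    by blast
qed

end
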